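(* Let $p$ be a prime and let $s(n)_{n\ge0}$ be a sequence of $p$-adic integers satisfying $s(n+\ell)+a_{\ell-1}s(n+\ell-1)+\cdots+a_0s(n)=0$ for all $n\ge0$ with $a_i\in\mathbb{Z}_p$; let $g(x)=x^\ell+a_{\ell-1}x^{\ell-1}+\cdots+a_0$, let $K$ be a splitting field of $g$ over $\mathbb{Q}_p$ with ramification index $e$ and uniformizer $\pi$. If $e<p-1$ and every root $\beta$ of $g(x)$ in $K$ satisfies $\beta\equiv 1\pmod{\pi}$, then $s(n)_{n\ge0}$ can be interpolated to $\mathbb{Z}_p$, i.e. there is a continuous function $t:\mathbb{Z}_p\to K$ with $s(n)=t(n)$ for all $n\ge 0$.
   Context: For a finite extension $K/\mathbb{Q}_p$, $|\cdot|_p$ is the unique extension of the $p$-adic absolute value, the valuation $\nu_p$ ($|x|_p=p^{-\nu_p(x)}$) has image $\frac1e\mathbb Z$ on $K^\times$ where $e$ is the ramification index, and a uniformizer is an element $\pi$ with $\nu_p(\pi)=1/e$. Congruence modulo $\pi$ is in $\mathcal O_K=\{x\in K:|x|_p\le1\}$. *)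

theory Defs
  imports "HOL-Analysis.Analysis" "HOL-Computational_Algebra.Polynomial"
begin

text \<open>We work inside the field K itself (a type 'k), equipped with an absolute value nv.
  Q_p and Z_p are recovered as the closures of the rationals/integers in K.\<close>

definition nonarch_abs :: "('k::field \<Rightarrow> real) \<Rightarrow> bool" where
  "nonarch_abs nv \<longleftrightarrow> nv 0 = 0 \<and> (\<forall>x. x \<noteq> 0 \<longrightarrow> nv x > 0) \<and>
     (\<forall>x y. nv (x * y) = nv x * nv y) \<and> (\<forall>x y. nv (x + y) \<le> max (nv x) (nv y))"

definition padic_abs :: "nat \<Rightarrow> ('k::field \<Rightarrow> real) \<Rightarrow> bool" where
  "padic_abs p nv \<longleftrightarrow> nonarch_abs nv \<and> nv (of_nat p) = 1 / real p"

definition nv_complete :: "('k::field \<Rightarrow> real) \<Rightarrow> bool" where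
  "nv_complete nv \<longleftrightarrow> (\<forall>X :: nat \<Rightarrow> 'k.
     (\<forall>\<epsilon>>0. \<exists>N. \<forall>m\<ge>N. \<forall>n\<ge>N. nv (X m - X n) < \<epsilon>) \<longrightarrow>
     (\<exists>L. \<forall>\<epsilon>>0. \<exists>N. \<forall>n\<ge>N. nv (X n - L) < \<epsilon>))"

definition nv_closure :: "('k::field \<Rightarrow> real) \<Rightarrow> 'k set \<Rightarrow> 'k set" where
  "nv_closure nv A = {x. \<forall>\<epsilon>>0. \<exists>a\<in>A. nv (x - a) < \<epsilon>}"

definition Qp_in :: "('k::field_char_0 \<Rightarrow> real) \<Rightarrow> 'k set" where
  "Qp_in nv = nv_closure nv (range of_rat)"

definition Zp_in :: "('k::field_char_0 \<Rightarrow> real) \<Rightarrow> 'k set" where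
  "Zp_in nv = nv_closure nv (range of_int)"

definition is_subfield :: "'k::field set \<Rightarrow> bool" where
  "is_subfield F \<longleftrightarrow> 0 \<in> F \<and> 1 \<in> F \<and> (\<forall>x\<in>F. \<forall>y\<in>F. x + y \<in> F \<and> x * y \<in> F) \<and>
     (\<forall>x\<in>F. - x \<in> F \<and> inverse x \<in> F)"

definition splitting_field_over :: "'k::field set \<Rightarrow> 'k poly \<Rightarrow> bool" where
  "splitting_field_over F g \<longleftrightarrow>
     (\<exists>rs. g = smult (lead_coeff g) (\<Prod>r\<leftarrow>rs. [:- r, 1:])) \<and>
     (\<forall>F'. is_subfield F' \<and> F \<subseteq> F' \<and> {r. poly g r = 0} \<subseteq> F' \<longrightarrow> F' = UNIV)"

definition ramification_index :: "nat \<Rightarrow> ('k::field \<Rightarrow> real) \<Rightarrow> nat \<Rightarrow> bool" where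
  "ramification_index p nv e \<longleftrightarrow> e > 0 \<and>
     {nv x | x. x \<noteq> 0} = {real p powr (real_of_int k / real e) | k. True}"

definition uniformizer :: "nat \<Rightarrow> ('k::field \<Rightarrow> real) \<Rightarrow> nat \<Rightarrow> 'k \<Rightarrow> bool" where
  "uniformizer p nv e \<pi> \<longleftrightarrow> \<pi> \<noteq> 0 \<and> nv \<pi> = real p powr (- 1 / real e)"

definition cong_mod_nv :: "('k::field \<Rightarrow> real) \<Rightarrow> 'k \<Rightarrow> 'k \<Rightarrow> 'k \<Rightarrow> bool" where
  "cong_mod_nv nv \<pi> x y \<longleftrightarrow> nv x \<le> 1 \<and> nv y \<le> 1 \<and> nv ((x - y) / \<pi>) \<le> 1"

definition nv_continuous_on :: "('k::field \<Rightarrow> real) \<Rightarrow> 'k set \<Rightarrow> ('k \<Rightarrow> 'k) \<Rightarrow> bool" where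
  "nv_continuous_on nv A t \<longleftrightarrow> (\<forall>x\<in>A. \<forall>\<epsilon>>0. \<exists>\<delta>>0. \<forall>y\<in>A.
      nv (y - x) < \<delta> \<longrightarrow> nv (t y - t x) < \<epsilon>)"

end

theory Submission
  imports Defs "HOL-Computational_Algebra.Primes"
begin

text \<open>Write \<open>E\<close> for the shift \<open>(E f)(n) = f(n+1)\<close> and \<open>\<Delta> = E - 1\<close>. The recurrence says
  \<open>g(E) s = 0\<close> with \<open>g = \<Prod>(X - \<beta>)\<close> and \<open>|\<beta> - 1| \<le> |\<pi>| < 1\<close>; peeling off one factor at a time,
  \<open>\<Delta> = (E - \<beta>) + (\<beta> - 1)\<close> gives \<open>|\<Delta>\<^sup>k s(n)| \<le> |\<pi>|\<^bsup>k+1-\<ell>\<^esup>\<close>, so \<open>\<Delta>\<^sup>k s \<rightarrow> 0\<close> uniformly in \<open>n\<close>.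
  By Newton's formula \<open>s(n + p\<^sup>m) - s(n) = \<Sum>\<^sub>k\<^sub>\<ge>\<^sub>1 (p\<^sup>m choose k) \<Delta>\<^sup>k s(n)\<close>: the terms with
  large \<open>k\<close> are small, and for small \<open>k\<close> the binomial coefficient is divisible by a high power
  of \<open>p\<close>. Hence \<open>s\<close> is uniformly continuous for the \<open>p\<close>-adic metric on \<open>\<nat>\<close>, and it extends
  to \<open>\<int>\<^sub>p\<close> by completeness.\<close>

lemma prime_power_dvd_binomial:
  fixes p :: nat
  assumes p: "prime p" and "0 < k" "k \<le> p ^ m" "k < p ^ j"
  shows "p ^ (m - j) dvd (p ^ m choose k)"
proof -
  have "k \<noteq> 0" "\<not> is_unit p" using \<open>0 < k\<close> p not_prime_unit by blast+
  then obtain y where "k = p ^ multiplicity p k * y" and y: "\<not> p dvd y"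
    by (rule multiplicity_decompose')
  then obtain v where k: "k = p ^ v * y" by blast
  have "p ^ v \<le> k" using k \<open>0 < k\<close> by (simp add: dvd_imp_le)
  hence "p ^ v < p ^ j" "p ^ v \<le> p ^ m" using assms(3,4) by linarith+
  hence vj: "v < j" and vm: "v \<le> m"
    using prime_gt_1_nat[OF p] power_less_imp_less_exp power_le_imp_le_exp by blast+
  have "p ^ v * (y * (p ^ m choose k)) = p ^ m * ((p ^ m - 1) choose (k - 1))"
    using times_binomial_minus1_eq[OF \<open>0 < k\<close>, of "p ^ m"] k by (simp only: mult.assoc)
  also have "\<dots> = p ^ v * (p ^ (m - v) * ((p ^ m - 1) choose (k - 1)))"
    using vm by (simp add: mult.assoc flip: power_add)
  finally have "p ^ (m - v) dvd y * (p ^ m choose k)"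
    using prime_gt_0_nat[OF p] by simp
  moreover have "coprime (p ^ (m - v)) y"
    using prime_imp_power_coprime[OF p y] coprime_commute by blast
  ultimately have "p ^ (m - v) dvd (p ^ m choose k)"
    using coprime_dvd_mult_right_iff by blast
  moreover have "p ^ (m - j) dvd p ^ (m - v)" using vj by (simp add: le_imp_power_dvd)
  ultimately show ?thesis using dvd_trans by blast
qed

section \<open>Non-archimedean absolute values\<close>

locale nonarch_field =
  fixes nv :: "'k::field \<Rightarrow> real"
  assumes nonarch: "nonarch_abs nv"
begin

lemma nv_0 [simp]: "nv 0 = 0"
  and nv_pos: "x \<noteq> 0 \<Longrightarrow> nv x > 0"
  and nv_mult: "nv (x * y) = nv x * nv y"
  and nv_add: "nv (x + y) \<le> max (nv x) (nv y)"
  using nonarch unfolding nonarch_abs_def by blast+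

lemma nv_nonneg: "nv x \<ge> 0"
  by (cases "x = 0") (auto dest: nv_pos)

lemma nv_1 [simp]: "nv 1 = 1"
  using nv_mult[of 1 1] nv_pos[of 1] by simp

lemma nv_minus [simp]: "nv (- x) = nv x"
proof -
  have "nv (- 1) ^ 2 = 1" using nv_mult[of "- 1" "- 1"] by (simp add: power2_eq_square)
  hence "nv (- 1) = 1" using nv_nonneg[of "- 1"] by (auto simp: power2_eq_1_iff)
  thus ?thesis using nv_mult[of "- 1" x] by simp
qed

lemma nv_minus_commute: "nv (x - y) = nv (y - x)"
  using nv_minus[of "x - y"] by simp

lemma nv_diff: "nv (x - y) \<le> max (nv x) (nv y)"
  using nv_add[of x "- y"] by simp

lemma nv_power: "nv (x ^ n) = nv x ^ n"
  by (induction n) (simp_all add: nv_mult)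

lemma nv_divide: "nv (x / y) = nv x / nv y"
proof (cases "y = 0")
  case False
  hence "nv (x / y) * nv y = nv x" using nv_mult[of "x / y" y] by simp
  thus ?thesis using nv_pos[OF False] by (simp add: field_simps)
qed simp

lemma nv_triangle_less: "nv (x - y) < \<epsilon> \<Longrightarrow> nv (y - z) < \<epsilon> \<Longrightarrow> nv (x - z) < \<epsilon>"
  using nv_add[of "x - y" "y - z"] by simp

lemma nv_sum_less:
  "finite A \<Longrightarrow> \<epsilon> > 0 \<Longrightarrow> (\<And>i. i \<in> A \<Longrightarrow> nv (f i) < \<epsilon>) \<Longrightarrow> nv (sum f A) < \<epsilon>"
proof (induction A rule: finite_induct)
  case (insert x F)
  thus ?case using nv_add[of "f x" "sum f F"] by (simp add: le_less_trans)
qed simp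

lemma nv_of_nat_le_1: "nv (of_nat n) \<le> 1"
proof (induction n)
  case (Suc n)
  thus ?case using nv_add[of 1 "of_nat n"] by simp
qed simp

lemma nv_of_int_le_1: "nv (of_int z) \<le> 1"
  by (cases z rule: int_cases) (simp_all add: nv_of_nat_le_1 del: of_nat_Suc)

end

section \<open>Polynomials in the shift operator\<close>

text \<open>\<open>poly_shift q f\<close> is \<open>q(E) f\<close>, and \<open>fwd_diff k f\<close> is \<open>\<Delta>\<^sup>k f = (E - 1)\<^sup>k f\<close>.\<close>

definition poly_shift :: "'a::comm_ring_1 poly \<Rightarrow> (nat \<Rightarrow> 'a) \<Rightarrow> nat \<Rightarrow> 'a" where
  "poly_shift q f n = (\<Sum>i\<le>degree q. coeff q i * f (n + i))"

lemma poly_shift_eq_sum_atMost: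
  "degree q \<le> N \<Longrightarrow> poly_shift q f n = (\<Sum>i\<le>N. coeff q i * f (n + i))"
  unfolding poly_shift_def by (rule sum.mono_neutral_left) (auto simp: coeff_eq_0)

lemma poly_shift_0 [simp]: "poly_shift 0 f n = 0"
  by (simp add: poly_shift_def)

lemma poly_shift_1 [simp]: "poly_shift 1 f n = f n"
  by (simp add: poly_shift_def)

lemma poly_shift_zero_fun: "poly_shift q (\<lambda>m. 0) n = 0"
  by (simp add: poly_shift_def)

lemma poly_shift_add: "poly_shift (q + r) f n = poly_shift q f n + poly_shift r f n"
proof -
  let ?N = "max (degree q) (degree r)"
  have "degree (q + r) \<le> ?N" by (rule degree_add_le) auto
  thus ?thesis
    by (simp add: poly_shift_eq_sum_atMost[of _ ?N] distrib_right sum.distrib)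
qed

lemma poly_shift_sum:
  "finite A \<Longrightarrow> poly_shift (\<Sum>k\<in>A. q k) f n = (\<Sum>k\<in>A. poly_shift (q k) f n)"
  by (induction A rule: finite_induct) (simp_all add: poly_shift_add)

lemma poly_shift_smult: "poly_shift (smult c q) f n = c * poly_shift q f n"
  using poly_shift_eq_sum_atMost[OF degree_smult_le, of c q f n]
  by (simp add: poly_shift_def sum_distrib_left mult.assoc)

lemma poly_shift_pCons: "poly_shift (pCons a q) f n = a * f n + poly_shift q f (Suc n)"
proof -
  have "poly_shift (pCons a q) f n = (\<Sum>i\<le>Suc (degree q). coeff (pCons a q) i * f (n + i))"
    by (rule poly_shift_eq_sum_atMost) simp
  also have "\<dots> = a * f n + poly_shift q f (Suc n)"
    by (subst sum.atMost_Suc_shift) (simp add: poly_shift_def)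
  finally show ?thesis .
qed

lemma poly_shift_mult: "poly_shift (q * r) f n = poly_shift q (poly_shift r f) n"
  by (induction q arbitrary: n) (simp_all add: poly_shift_add poly_shift_smult poly_shift_pCons)

lemma poly_shift_X_power: "poly_shift ([:0, 1:] ^ N) f n = f (n + N)"
proof (induction N arbitrary: n)
  case (Suc N)
  have "poly_shift ([:0, 1:] ^ N) f = (\<lambda>m. f (m + N))"
    using Suc.IH by (simp add: fun_eq_iff)
  hence "poly_shift ([:0, 1:] ^ Suc N) f n = poly_shift [:0, 1:] (\<lambda>m. f (m + N)) n"
    by (simp only: poly_shift_mult power_Suc)
  thus ?case by (simp add: poly_shift_pCons)
qed simp

lemma poly_shift_monom: "poly_shift (monom c N) f n = c * f (n + N)"
  by (simp add: monom_altdef poly_shift_smult poly_shift_X_power)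

lemma poly_shift_add_scaled:
  "poly_shift q (\<lambda>m. f m + c * h m) n = poly_shift q f n + c * poly_shift q h n"
  by (simp add: poly_shift_def algebra_simps sum.distrib sum_distrib_left)

definition fwd_diff :: "nat \<Rightarrow> (nat \<Rightarrow> 'a::comm_ring_1) \<Rightarrow> nat \<Rightarrow> 'a" where
  "fwd_diff k f = poly_shift ([:- 1, 1:] ^ k) f"

lemma fwd_diff_0 [simp]: "fwd_diff 0 f n = f n"
  by (simp add: fwd_diff_def)

lemma fwd_diff_Suc: "fwd_diff (Suc k) f n = fwd_diff k f (Suc n) - fwd_diff k f n"
  by (simp only: fwd_diff_def poly_shift_mult power_Suc) (simp add: poly_shift_pCons)

lemma fwd_diff_Suc_inner: "fwd_diff (Suc k) f n = fwd_diff k (\<lambda>m. f (Suc m) - f m) n"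
proof -
  have "fwd_diff (Suc k) f n = poly_shift ([:- 1, 1:] ^ k) (poly_shift [:- 1, 1:] f) n"
    by (simp only: fwd_diff_def poly_shift_mult power_Suc2)
  also have "poly_shift [:- 1, 1:] f = (\<lambda>m. f (Suc m) - f m)"
    by (simp add: poly_shift_pCons fun_eq_iff)
  finally show ?thesis by (simp add: fwd_diff_def)
qed

lemma fwd_diff_add_scaled:
  "fwd_diff k (\<lambda>m. f m + c * h m) n = fwd_diff k f n + c * fwd_diff k h n"
  by (simp add: fwd_diff_def poly_shift_add_scaled)

lemma shift_eq_sum_fwd_diff: "f (n + N) = (\<Sum>k\<le>N. of_nat (N choose k) * fwd_diff k f n)"
proof -
  have "([:0, 1:] :: 'a poly) ^ N = ([:- 1, 1:] + 1) ^ N" by (simp add: one_pCons)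
  also have "\<dots> = (\<Sum>k\<le>N. smult (of_nat (N choose k)) ([:- 1, 1:] ^ k))"
    by (simp add: binomial_ring of_nat_poly)
  finally show ?thesis
    using poly_shift_X_power[of N f n] by (simp add: poly_shift_sum poly_shift_smult fwd_diff_def)
qed

lemma poly_shift_monic_recurrence:
  "poly_shift (monom 1 l + (\<Sum>i<l. monom (a i) i)) f n = f (n + l) + (\<Sum>i<l. a i * f (n + i))"
  by (simp add: poly_shift_add poly_shift_sum poly_shift_monom)

lemma lead_coeff_monic_recurrence:
  "lead_coeff (monom 1 l + (\<Sum>i<l. monom (a i) i)) = (1 :: 'a :: idom)"
proof -
  let ?g = "monom 1 l + (\<Sum>i<l. monom (a i) i)"
  have "coeff ?g l = 1" by (simp add: coeff_sum)
  moreover have "degree ?g \<le> l"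
    by (intro degree_add_le degree_sum_le) (auto intro: order_trans[OF degree_monom_le])
  moreover have "l \<le> degree ?g" using \<open>coeff ?g l = 1\<close> by (intro le_degree) simp
  ultimately show ?thesis by simp
qed

section \<open>Decay of the forward differences\<close>

context nonarch_field
begin

lemma nv_diff_le_if_cong_mod:
  assumes "cong_mod_nv nv \<pi> x y" and "\<pi> \<noteq> 0"
  shows "nv (x - y) \<le> nv \<pi>"
  using assms nv_pos[of \<pi>] unfolding cong_mod_nv_def by (simp add: nv_divide divide_le_eq)

lemma fwd_diff_le_1:
  assumes "\<And>m. nv (f m) \<le> 1"
  shows "nv (fwd_diff k f n) \<le> 1"
proof (induction k arbitrary: n)
  case (Suc k)
  show ?case
    unfolding fwd_diff_Suc by (rule order_trans[OF nv_diff max.boundedI]) (fact Suc.IH)+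
qed (simp add: assms)

text \<open>One factor \<open>E - \<beta>\<close> of the annihilating polynomial costs at most one power of \<open>\<rho>\<close>:
  with \<open>u = (E - \<beta>) f\<close> and \<open>c = \<beta> - 1\<close> we have \<open>\<Delta>\<^sup>k\<^sup>+\<^sup>1 f = \<Delta>\<^sup>k u + c \<Delta>\<^sup>k f\<close>.\<close>

lemma fwd_diff_bound_peel:
  assumes peel: "\<And>m. f (Suc m) - f m = u m + c * f m"
    and f: "\<And>m. nv (f m) \<le> 1" and c: "nv c \<le> \<rho>" and \<rho>: "0 \<le> \<rho>" "\<rho> \<le> 1"
    and u: "\<And>k n. nv (fwd_diff k u n) \<le> \<rho> ^ (k + 1 - L)"
  shows "nv (fwd_diff k f n) \<le> \<rho> ^ (k + 1 - Suc L)"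
proof (induction k arbitrary: n)
  case 0
  show ?case using f by simp
next
  case (Suc k)
  have "fwd_diff (Suc k) f n = fwd_diff k u n + c * fwd_diff k f n"
    by (simp add: fwd_diff_Suc_inner peel fwd_diff_add_scaled)
  moreover have "nv (c * fwd_diff k f n) \<le> \<rho> * \<rho> ^ (k + 1 - Suc L)"
    unfolding nv_mult using c Suc.IH \<rho> by (simp add: mult_mono nv_nonneg)
  moreover have "\<rho> * \<rho> ^ (k + 1 - Suc L) \<le> \<rho> ^ (Suc k + 1 - Suc L)"
    using \<rho> by (simp flip: power_Suc add: power_decreasing)
  moreover have "nv (fwd_diff k u n) \<le> \<rho> ^ (Suc k + 1 - Suc L)"
    using u by simp
  ultimately show ?case
    using nv_add[of "fwd_diff k u n" "c * fwd_diff k f n"] by simp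
qed

lemma fwd_diff_bound_if_annihilated:
  assumes "\<And>n. poly_shift (\<Prod>r\<leftarrow>rs. [:- r, 1:]) f n = 0"
    and "\<And>m. nv (f m) \<le> 1" and "\<And>r. r \<in> set rs \<Longrightarrow> nv (r - 1) \<le> \<rho>"
    and "0 \<le> \<rho>" "\<rho> \<le> 1"
  shows "nv (fwd_diff k f n) \<le> \<rho> ^ (k + 1 - length rs)"
  using assms
proof (induction rs arbitrary: f k n)
  case Nil
  hence "f = (\<lambda>m. 0)" by (simp add: fun_eq_iff)
  thus ?case using \<open>0 \<le> \<rho>\<close> by (simp add: fwd_diff_def poly_shift_zero_fun)
next
  case (Cons r rs)
  define u where "u m = f (Suc m) - r * f m" for m
  have "poly_shift [:- r, 1:] f = u"
    by (simp add: fun_eq_iff u_def poly_shift_pCons)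
  hence "poly_shift (\<Prod>r\<leftarrow>rs. [:- r, 1:]) u n = poly_shift (\<Prod>r\<leftarrow>r # rs. [:- r, 1:]) f n" for n
    by (simp only: list.map(2) prod_list.Cons mult.commute[of "[:- r, 1:]"] poly_shift_mult)
  hence "poly_shift (\<Prod>r\<leftarrow>rs. [:- r, 1:]) u n = 0" for n
    using Cons.prems(1) by simp
  moreover have "nv r \<le> 1"
    using nv_add[of "r - 1" 1] Cons.prems(3)[of r] \<open>\<rho> \<le> 1\<close> by simp
  hence "nv (r * f m) \<le> 1" for m
    using Cons.prems(2) by (simp add: nv_mult mult_le_one nv_nonneg)
  hence "nv (u m) \<le> 1" for m
    unfolding u_def using Cons.prems(2) by (meson order_trans nv_diff max.boundedI)
  ultimately have "nv (fwd_diff k u n) \<le> \<rho> ^ (k + 1 - length rs)" for k n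
    using Cons by simp
  moreover have "f (Suc m) - f m = u m + (r - 1) * f m" for m
    by (simp add: u_def algebra_simps)
  ultimately show ?case
    using fwd_diff_bound_peel[of f u "r - 1" \<rho>] Cons.prems by simp
qed

lemma fwd_diff_uniformly_small:
  assumes "\<And>k n. nv (fwd_diff k f n) \<le> \<rho> ^ (k + 1 - L)" and "0 \<le> \<rho>" "\<rho> < 1" "\<epsilon> > 0"
  shows "\<exists>K. \<forall>k\<ge>K. \<forall>n. nv (fwd_diff k f n) < \<epsilon>"
proof -
  obtain N where N: "\<rho> ^ N < \<epsilon>" using real_arch_pow_inv[OF \<open>\<epsilon> > 0\<close> \<open>\<rho> < 1\<close>] by blast
  have "\<rho> ^ (k + 1 - L) \<le> \<rho> ^ N" if "k \<ge> N + L" for k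
    using that assms(2,3) by (intro power_decreasing) auto
  thus ?thesis using assms(1) N by (meson order.trans order_le_less_trans)
qed

end

section \<open>The \<open>p\<close>-adic absolute value on the integers\<close>

locale padic_field =
  fixes nv :: "'k::field_char_0 \<Rightarrow> real" and p :: nat
  assumes padic: "padic_abs p nv" and prime: "prime p"

sublocale padic_field \<subseteq> nonarch_field
  using padic unfolding padic_abs_def by unfold_locales blast

context padic_field
begin

lemma p_gt_1: "p > 1"
  using prime prime_gt_1_nat by blast

lemma inverse_p_bounds: "0 < 1 / real p" "1 / real p < 1"
  using p_gt_1 by simp_all

lemma nv_of_nat_p: "nv (of_nat p) = 1 / real p"
  using padic unfolding padic_abs_def by blast

lemma nv_of_int_p_power_mult: "nv (of_int (int p ^ m * z)) = (1 / real p) ^ m * nv (of_int z)"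
  by (simp add: nv_mult nv_power nv_of_nat_p)

lemma nv_of_int_p_power_mult_le: "nv (of_int (int p ^ m * z)) \<le> (1 / real p) ^ m"
  unfolding nv_of_int_p_power_mult using nv_of_int_le_1[of z] by (simp add: mult_left_le)

lemma nv_of_nat_le_if_dvd:
  assumes "p ^ m dvd c"
  shows "nv (of_nat c) \<le> (1 / real p) ^ m"
proof -
  obtain k where "c = p ^ m * k" using assms by blast
  hence "(of_nat c :: 'k) = of_int (int p ^ m * int k)" by simp
  thus ?thesis using nv_of_int_p_power_mult_le by metis
qed

lemma nv_of_int_not_dvd:
  assumes "\<not> int p dvd w"
  shows "nv (of_int w) = 1"
proof -
  have "coprime (int p) w" using prime assms prime_imp_coprime[of "int p"] by simp
  then obtain u v where "u * int p + v * w = 1"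
    using bezout_int[of "int p" w] by (auto simp: coprime_iff_gcd_eq_1)
  hence "1 \<le> max (nv (of_int u * of_nat p)) (nv (of_int v * of_int w))"
    using nv_add[of "of_int u * of_nat p" "of_int v * of_int w"]
    by (metis nv_1 of_int_1 of_int_add of_int_mult of_int_of_nat_eq)
  moreover have "nv (of_int u * of_nat p) < 1"
    using nv_of_int_le_1[of u] nv_nonneg[of "of_int u"] inverse_p_bounds
    by (simp add: nv_mult nv_of_nat_p mult_le_less_imp_less)
  moreover have "nv (of_int v * of_int w) \<le> nv (of_int w)"
    using nv_of_int_le_1[of v] nv_nonneg by (simp add: nv_mult mult_left_le_one_le)
  ultimately show ?thesis using nv_of_int_le_1[of w] by linarith
qed

lemma p_power_dvd_if_nv_less:
  assumes "nv (of_int z) < (1 / real p) ^ m"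
  shows "int p ^ m dvd z"
proof (cases "z = 0")
  case False
  have "\<not> is_unit (int p)" using p_gt_1 by simp
  with False obtain w where z: "z = int p ^ multiplicity (int p) z * w" and "\<not> int p dvd w"
    by (rule multiplicity_decompose')
  hence "nv (of_int z) = (1 / real p) ^ multiplicity (int p) z"
    by (metis nv_of_int_p_power_mult nv_of_int_not_dvd mult_1_right)
  hence "m < multiplicity (int p) z" using assms inverse_p_bounds by simp
  hence "int p ^ m dvd int p ^ multiplicity (int p) z" by (simp add: le_imp_power_dvd)
  thus ?thesis by (metis z dvd_mult2)
qed simp

lemma nv_le_1_if_in_Zp:
  assumes "x \<in> Zp_in nv"
  shows "nv x \<le> 1"
proof -
  obtain z where "nv (x - of_int z) < 1"
    using assms unfolding Zp_in_def nv_closure_def by force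
  thus ?thesis using nv_add[of "x - of_int z" "of_int z"] nv_of_int_le_1[of z] by simp
qed

lemma nv_uniformizer_less_1:
  assumes "ramification_index p nv e" and "uniformizer p nv e \<pi>"
  shows "nv \<pi> < 1"
  using assms p_gt_1 unfolding ramification_index_def uniformizer_def by (simp add: powr_less_one)

lemma inverse_p_power_less: "\<epsilon> > 0 \<Longrightarrow> \<exists>m. (1 / real p) ^ m < \<epsilon>"
  using real_arch_pow_inv inverse_p_bounds by blast

end

section \<open>Uniform continuity for the \<open>p\<close>-adic metric on \<open>\<nat>\<close>\<close>

context nonarch_field
begin

definition uniformly_continuous_on_nat :: "(nat \<Rightarrow> 'k) \<Rightarrow> bool" where
  "uniformly_continuous_on_nat f \<longleftrightarrow>
     (\<forall>\<epsilon>>0. \<exists>\<delta>>0. \<forall>n n'. nv (of_nat n - of_nat n') < \<delta> \<longrightarrow> nv (f n - f n') < \<epsilon>)"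

lemma nv_diff_shift_mult_less:
  fixes f :: "nat \<Rightarrow> 'k"
  assumes "\<And>n. nv (f (n + d) - f n) < \<epsilon>" and "\<epsilon> > 0"
  shows "nv (f (n + d * c) - f n) < \<epsilon>"
proof (induction c)
  case (Suc c)
  have "n + d * Suc c = (n + d * c) + d" by simp
  thus ?case using assms(1)[of "n + d * c"] Suc.IH nv_triangle_less by metis
qed (simp add: \<open>\<epsilon> > 0\<close>)

end

context padic_field
begin

lemma shift_p_power_close:
  fixes f :: "nat \<Rightarrow> 'k"
  assumes f: "\<And>m. nv (f m) \<le> 1"
    and K: "\<And>k n. k \<ge> K \<Longrightarrow> nv (fwd_diff k f n) < \<epsilon>"
    and N: "(1 / real p) ^ N < \<epsilon>"
  shows "nv (f (n + p ^ (K + N)) - f n) < \<epsilon>"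
proof -
  have "\<epsilon> > 0" using N inverse_p_bounds by (meson zero_less_power order_less_trans)
  have "K < p ^ K"
    using less_exp[of K] power_mono[of 2 p K] p_gt_1 by linarith
  have summand: "nv (of_nat (p ^ (K + N) choose k) * fwd_diff k f n) < \<epsilon>"
    if "1 \<le> k" "k \<le> p ^ (K + N)" for k
  proof (cases "K \<le> k")
    case True
    have "nv (of_nat (p ^ (K + N) choose k) * fwd_diff k f n) \<le> nv (fwd_diff k f n)"
      using nv_of_nat_le_1 by (simp add: nv_mult mult_left_le_one_le nv_nonneg)
    thus ?thesis using K[OF True, of n] by linarith
  next
    case False
    hence "p ^ N dvd (p ^ (K + N) choose k)"
      using prime_power_dvd_binomial[OF prime _ that(2), of K] that(1) \<open>K < p ^ K\<close> by simp
    hence "nv (of_nat (p ^ (K + N) choose k)) \<le> (1 / real p) ^ N"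
      by (rule nv_of_nat_le_if_dvd)
    moreover have "nv (fwd_diff k f n) \<le> 1" using f by (rule fwd_diff_le_1)
    hence "nv (of_nat (p ^ (K + N) choose k) * fwd_diff k f n) \<le> nv (of_nat (p ^ (K + N) choose k))"
      by (simp add: nv_mult mult_right_le_one_le nv_nonneg)
    ultimately show ?thesis using N by linarith
  qed
  have "f (n + p ^ (K + N)) - f n =
      (\<Sum>k = 1..p ^ (K + N). of_nat (p ^ (K + N) choose k) * fwd_diff k f n)"
    by (simp add: shift_eq_sum_fwd_diff[of f n] atMost_atLeast0 sum.atLeast_Suc_atMost)
  also have "nv \<dots> < \<epsilon>"
    using summand \<open>\<epsilon> > 0\<close> by (intro nv_sum_less) simp_all
  finally show ?thesis .
qed

lemma uniformly_continuous_on_nat_if_fwd_diff_small: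
  fixes f :: "nat \<Rightarrow> 'k"
  assumes f: "\<And>m. nv (f m) \<le> 1"
    and decay: "\<And>\<epsilon>. \<epsilon> > 0 \<Longrightarrow> \<exists>K. \<forall>k\<ge>K. \<forall>n. nv (fwd_diff k f n) < \<epsilon>"
  shows "uniformly_continuous_on_nat f"
  unfolding uniformly_continuous_on_nat_def
proof (intro allI impI)
  fix \<epsilon> :: real assume "\<epsilon> > 0"
  obtain K where K: "\<forall>k\<ge>K. \<forall>n. nv (fwd_diff k f n) < \<epsilon>" using decay[OF \<open>\<epsilon> > 0\<close>] by blast
  obtain N where N: "(1 / real p) ^ N < \<epsilon>" using inverse_p_power_less[OF \<open>\<epsilon> > 0\<close>] by blast
  define m where "m = K + N"
  have step: "nv (f (n + p ^ m) - f n) < \<epsilon>" for n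
    unfolding m_def by (rule shift_p_power_close) (use f K N in auto)
  have close: "nv (f n - f n') < \<epsilon>" if "n' \<le> n" "nv (of_nat n - of_nat n') < (1 / real p) ^ m" for n n'
  proof -
    have "(of_int (int (n - n')) :: 'k) = of_nat n - of_nat n'"
      using that(1) by (simp add: of_nat_diff)
    hence "int p ^ m dvd int (n - n')"
      using that(2) by (intro p_power_dvd_if_nv_less) simp
    hence "p ^ m dvd n - n'" by (metis int_dvd_int_iff of_nat_power)
    then obtain c where "n - n' = p ^ m * c" by (rule dvdE)
    hence "n = n' + p ^ m * c" using that(1) by simp
    thus ?thesis using nv_diff_shift_mult_less[of f "p ^ m", OF step \<open>\<epsilon> > 0\<close>] by simp
  qed
  show "\<exists>\<delta>>0. \<forall>n n'. nv (of_nat n - of_nat n') < \<delta> \<longrightarrow> nv (f n - f n') < \<epsilon>"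
  proof (intro exI[of _ "(1 / real p) ^ m"] conjI allI impI)
    fix n n' assume "nv (of_nat n - of_nat n') < (1 / real p) ^ m"
    thus "nv (f n - f n') < \<epsilon>"
    proof (cases "n' \<le> n")
      case False
      hence "nv (f n' - f n) < \<epsilon>"
        using \<open>nv (of_nat n - of_nat n') < _\<close> by (intro close) (simp_all add: nv_minus_commute[of "of_nat n"])
      thus ?thesis by (simp add: nv_minus_commute[of "f n"])
    qed (rule close)
  qed (use inverse_p_bounds in simp)
qed

end

section \<open>Extension to \<open>\<int>\<^sub>p\<close>\<close>

definition (in nonarch_field) nat_limit :: "(nat \<Rightarrow> 'k) \<Rightarrow> 'k \<Rightarrow> 'k \<Rightarrow> bool" where
  "nat_limit f x L \<longleftrightarrow> (\<forall>\<epsilon>>0. \<exists>\<delta>>0. \<forall>n. nv (of_nat n - x) < \<delta> \<longrightarrow> nv (f n - L) < \<epsilon>)"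

context padic_field
begin

lemma of_nat_in_Zp: "of_nat n \<in> Zp_in nv"
  unfolding Zp_in_def nv_closure_def by (auto intro!: exI[of _ "int n"])

lemma Zp_nat_dense:
  assumes "x \<in> Zp_in nv" and "\<epsilon> > 0"
  shows "\<exists>n. nv (of_nat n - x) < \<epsilon>"
proof -
  obtain z where z: "nv (x - of_int z) < \<epsilon>"
    using assms unfolding Zp_in_def nv_closure_def by blast
  obtain M where M: "(1 / real p) ^ M < \<epsilon>" using inverse_p_power_less[OF \<open>\<epsilon> > 0\<close>] by blast
  have "\<bar>z\<bar> \<le> int p ^ M * \<bar>z\<bar>"
    using p_gt_1 by (simp add: mult_le_cancel_right1)
  hence "z + int p ^ M * \<bar>z\<bar> \<ge> 0" by linarith
  then obtain n where n: "int n = z + int p ^ M * \<bar>z\<bar>" using nonneg_eq_int by metis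
  have "nv (of_nat n - of_int z) = nv (of_int (int p ^ M * \<bar>z\<bar>) :: 'k)"
    by (metis n add_diff_cancel_left' of_int_diff of_int_of_nat_eq)
  also have "\<dots> < \<epsilon>" using nv_of_int_p_power_mult_le M by (rule order.strict_trans1)
  finally have "nv (of_nat n - of_int z) < \<epsilon>" .
  moreover have "nv (of_int z - x) < \<epsilon>" using z by (simp add: nv_minus_commute[of x])
  ultimately have "nv (of_nat n - x) < \<epsilon>" by (rule nv_triangle_less)
  thus ?thesis ..
qed

lemma nat_limits_close:
  assumes "x \<in> Zp_in nv" "y \<in> Zp_in nv" and "nat_limit f x L" "nat_limit f y L'"
    and uc: "\<And>n n'. nv (of_nat n - of_nat n') < \<delta> \<Longrightarrow> nv (f n - f n') < \<epsilon>"
    and "\<delta> > 0" "\<epsilon> > 0" "nv (y - x) < \<delta>"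
  shows "nv (L' - L) < \<epsilon>"
proof -
  obtain \<delta>x where "\<delta>x > 0" and \<delta>x: "\<And>n. nv (of_nat n - x) < \<delta>x \<Longrightarrow> nv (f n - L) < \<epsilon>"
    using assms(3) \<open>\<epsilon> > 0\<close> unfolding nat_limit_def by blast
  obtain \<delta>y where "\<delta>y > 0" and \<delta>y: "\<And>n. nv (of_nat n - y) < \<delta>y \<Longrightarrow> nv (f n - L') < \<epsilon>"
    using assms(4) \<open>\<epsilon> > 0\<close> unfolding nat_limit_def by blast
  obtain n where n: "nv (of_nat n - x) < min \<delta> \<delta>x"
    using Zp_nat_dense[OF assms(1)] \<open>\<delta> > 0\<close> \<open>\<delta>x > 0\<close> by (meson min_less_iff_conj)
  obtain n' where n': "nv (of_nat n' - y) < min \<delta> \<delta>y"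
    using Zp_nat_dense[OF assms(2)] \<open>\<delta> > 0\<close> \<open>\<delta>y > 0\<close> by (meson min_less_iff_conj)
  have "nv (of_nat n' - y) < \<delta>" using n' by simp
  hence "nv (of_nat n' - x) < \<delta>" using \<open>nv (y - x) < \<delta>\<close> by (rule nv_triangle_less)
  moreover have "nv (x - of_nat n) < \<delta>" using n by (simp add: nv_minus_commute[of x])
  ultimately have "nv (of_nat n' - of_nat n) < \<delta>" by (rule nv_triangle_less)
  hence "nv (f n' - f n) < \<epsilon>" by (rule uc)
  moreover have "nv (L' - f n') < \<epsilon>" using \<delta>y n' by (simp add: nv_minus_commute[of L'])
  moreover have "nv (f n - L) < \<epsilon>" using \<delta>x n by simp
  ultimately show ?thesis by (meson nv_triangle_less)
qed

lemma nat_limit_exists: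
  assumes uc: "uniformly_continuous_on_nat f" and "nv_complete nv" and x: "x \<in> Zp_in nv"
  shows "\<exists>L. nat_limit f x L"
proof -
  have "\<forall>j. \<exists>n. nv (of_nat n - x) < (1 / real p) ^ j"
    using inverse_p_bounds(1) by (intro allI Zp_nat_dense[OF x] zero_less_power)
  from choice[OF this] obtain ns where ns: "\<forall>j. nv (of_nat (ns j) - x) < (1 / real p) ^ j" ..
  have ns_near: "nv (of_nat (ns j) - x) < \<delta>" "nv (x - of_nat (ns j)) < \<delta>"
    if "(1 / real p) ^ J < \<delta>" "j \<ge> J" for j J \<delta>
  proof -
    have "(1 / real p) ^ j \<le> (1 / real p) ^ J" using that(2) inverse_p_bounds by simp
    thus "nv (of_nat (ns j) - x) < \<delta>" using ns[rule_format, of j] that(1) by linarith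
    thus "nv (x - of_nat (ns j)) < \<delta>" by (simp add: nv_minus_commute[of x])
  qed
  have "\<exists>N. \<forall>i\<ge>N. \<forall>j\<ge>N. nv (f (ns i) - f (ns j)) < \<epsilon>" if "\<epsilon> > 0" for \<epsilon>
  proof -
    obtain \<delta> where "\<delta> > 0" and \<delta>: "\<And>n n'. nv (of_nat n - of_nat n') < \<delta> \<Longrightarrow> nv (f n - f n') < \<epsilon>"
      using uc \<open>\<epsilon> > 0\<close> unfolding uniformly_continuous_on_nat_def by blast
    obtain J where J: "(1 / real p) ^ J < \<delta>" using inverse_p_power_less[OF \<open>\<delta> > 0\<close>] by blast
    have "nv (f (ns i) - f (ns j)) < \<epsilon>" if "i \<ge> J" "j \<ge> J" for i j
      using ns_near(1)[OF J that(1)] ns_near(2)[OF J that(2)] by (rule \<delta>[OF nv_triangle_less])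
    thus ?thesis by blast
  qed
  then obtain L where L: "\<And>\<epsilon>. \<epsilon> > 0 \<Longrightarrow> \<exists>N. \<forall>j\<ge>N. nv (f (ns j) - L) < \<epsilon>"
    using \<open>nv_complete nv\<close>[unfolded nv_complete_def, rule_format, of "\<lambda>j. f (ns j)"] by blast
  have "nat_limit f x L"
    unfolding nat_limit_def
  proof (intro allI impI)
    fix \<epsilon> :: real assume "\<epsilon> > 0"
    obtain \<delta> where "\<delta> > 0" and \<delta>: "\<And>n n'. nv (of_nat n - of_nat n') < \<delta> \<Longrightarrow> nv (f n - f n') < \<epsilon>"
      using uc \<open>\<epsilon> > 0\<close> unfolding uniformly_continuous_on_nat_def by blast
    obtain J where J: "(1 / real p) ^ J < \<delta>" using inverse_p_power_less[OF \<open>\<delta> > 0\<close>] by blast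
    obtain N where N: "\<forall>j\<ge>N. nv (f (ns j) - L) < \<epsilon>" using L[OF \<open>\<epsilon> > 0\<close>] by blast
    define j where "j = max J N"
    have "nv (f n - L) < \<epsilon>" if "nv (of_nat n - x) < \<delta>" for n
    proof -
      have "nv (of_nat n - of_nat (ns j)) < \<delta>"
        by (rule nv_triangle_less[OF that ns_near(2)[OF J]]) (simp add: j_def)
      hence "nv (f n - f (ns j)) < \<epsilon>" by (rule \<delta>)
      moreover have "nv (f (ns j) - L) < \<epsilon>" using N j_def by simp
      ultimately show ?thesis by (rule nv_triangle_less)
    qed
    thus "\<exists>\<delta>>0. \<forall>n. nv (of_nat n - x) < \<delta> \<longrightarrow> nv (f n - L) < \<epsilon>" using \<open>\<delta> > 0\<close> by blast
  qed
  thus ?thesis ..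
qed

lemma continuous_extension_from_nat:
  assumes uc: "uniformly_continuous_on_nat f" and "nv_complete nv"
  shows "\<exists>t. nv_continuous_on nv (Zp_in nv) t \<and> (\<forall>n. f n = t (of_nat n))"
proof -
  define t where "t x = (SOME L. nat_limit f x L)" for x
  have t: "nat_limit f x (t x)" if "x \<in> Zp_in nv" for x
    unfolding t_def using nat_limit_exists[OF uc \<open>nv_complete nv\<close> that] by (rule someI_ex)
  have t_close: "\<exists>\<delta>>0. \<forall>y\<in>Zp_in nv. nv (y - x) < \<delta> \<longrightarrow> nv (t y - t x) < \<epsilon>"
    if x: "x \<in> Zp_in nv" and "\<epsilon> > 0" for x \<epsilon>
  proof -
    obtain \<delta> where "\<delta> > 0" and \<delta>: "\<forall>n n'. nv (of_nat n - of_nat n') < \<delta> \<longrightarrow> nv (f n - f n') < \<epsilon>"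
      using uc \<open>\<epsilon> > 0\<close> unfolding uniformly_continuous_on_nat_def by blast
    have "nv (t y - t x) < \<epsilon>" if "y \<in> Zp_in nv" "nv (y - x) < \<delta>" for y
      by (rule nat_limits_close[OF x that(1) t[OF x] t[OF that(1)]])
        (use \<delta> \<open>\<delta> > 0\<close> \<open>\<epsilon> > 0\<close> that(2) in auto)
    thus ?thesis using \<open>\<delta> > 0\<close> by blast
  qed
  have "f n = t (of_nat n)" for n
  proof (rule ccontr)
    assume "f n \<noteq> t (of_nat n)"
    define \<epsilon> where "\<epsilon> = nv (t (of_nat n) - f n)"
    have "\<epsilon> > 0" using \<open>f n \<noteq> t (of_nat n)\<close> by (simp add: \<epsilon>_def nv_pos)
    then obtain \<delta> where "\<delta> > 0" and \<delta>: "\<And>m m'. nv (of_nat m - of_nat m') < \<delta> \<Longrightarrow> nv (f m - f m') < \<epsilon>"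
      using uc unfolding uniformly_continuous_on_nat_def by blast
    have lim: "nat_limit f (of_nat n) (f n)"
      using uc unfolding uniformly_continuous_on_nat_def nat_limit_def by blast
    have "nv (t (of_nat n) - f n) < \<epsilon>"
      by (rule nat_limits_close[where x = "of_nat n" and y = "of_nat n"])
        (use of_nat_in_Zp t[OF of_nat_in_Zp] lim \<delta> \<open>\<delta> > 0\<close> \<open>\<epsilon> > 0\<close> in auto)
    thus False by (simp add: \<epsilon>_def)
  qed
  moreover have "nv_continuous_on nv (Zp_in nv) t"
    unfolding nv_continuous_on_def using t_close by blast
  ultimately show ?thesis by blast
qed

end

theorem corollary3p6:
  fixes p :: nat and nv :: "'k::field_char_0 \<Rightarrow> real"
    and s a :: "nat \<Rightarrow> 'k" and l e :: nat and \<pi> :: 'k and g :: "'k poly"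
  assumes "prime p"
    and "padic_abs p nv" and "nv_complete nv"
    and "\<forall>n. s n \<in> Zp_in nv"
    and "\<forall>i<l. a i \<in> Zp_in nv"
    and "\<forall>n. s (n + l) + (\<Sum>i<l. a i * s (n + i)) = 0"
    and "g = monom 1 l + (\<Sum>i<l. monom (a i) i)"
    and "splitting_field_over (Qp_in nv) g"
    and "ramification_index p nv e"
    and "uniformizer p nv e \<pi>"
    and "e < p - 1"
    and "\<forall>\<beta>. poly g \<beta> = 0 \<longrightarrow> cong_mod_nv nv \<pi> \<beta> 1"
  shows "\<exists>t :: 'k \<Rightarrow> 'k. nv_continuous_on nv (Zp_in nv) t \<and> (\<forall>n. s n = t (of_nat n))"
proof -
  interpret padic_field nv p using assms(1,2) by unfold_locales
  have \<pi>: "0 \<le> nv \<pi>" "nv \<pi> < 1" "\<pi> \<noteq> 0"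
    using nv_nonneg nv_uniformizer_less_1[OF assms(9,10)] assms(10) unfolding uniformizer_def by auto
  have "lead_coeff g = 1" unfolding assms(7) by (rule lead_coeff_monic_recurrence)
  then obtain rs where g: "g = (\<Prod>r\<leftarrow>rs. [:- r, 1:])"
    using assms(8) unfolding splitting_field_over_def by auto
  have "poly g r = 0" if "r \<in> set rs" for r
    using that unfolding g by (induction rs) auto
  hence "nv (r - 1) \<le> nv \<pi>" if "r \<in> set rs" for r
    using that assms(12) nv_diff_le_if_cong_mod[OF _ \<pi>(3)] by blast
  moreover have "nv (s n) \<le> 1" for n using assms(4) nv_le_1_if_in_Zp by blast
  moreover have "poly_shift (\<Prod>r\<leftarrow>rs. [:- r, 1:]) s n = 0" for n
    using assms(6) by (simp flip: g add: assms(7) poly_shift_monic_recurrence)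
  ultimately have "nv (fwd_diff k s n) \<le> nv \<pi> ^ (k + 1 - length rs)" for k n
    using \<pi> by (intro fwd_diff_bound_if_annihilated) auto
  hence "uniformly_continuous_on_nat s"
    using \<open>\<And>n. nv (s n) \<le> 1\<close> \<pi>
    by (intro uniformly_continuous_on_nat_if_fwd_diff_small fwd_diff_uniformly_small) auto
  thus ?thesis using assms(3) by (rule continuous_extension_from_nat)
qed

end
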